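(* Let $\lambda\in\Lambda^{\bullet}(n,r)$ and $A\in\mathrm{cb}(\lambda)$. Then: (1) there exist indices $1\le i_1,\dots,i_l\le n-1$ with $e_{i_1}e_{i_2}\cdots e_{i_l}\cdot\overline{e_A}=\overline{k_\lambda}$ in $S_\lambda$; (2) for indices $1\le i_1,\dots,i_l\le n-1$, the identity $e_{i_1}e_{i_2}\cdots e_{i_l}\cdot\overline{e_A}=\overline{k_\lambda}$ holds if and only if $\overline{e_A}=f_{i_l}\cdots f_{i_2}f_{i_1}\cdot\overline{k_\lambda}$; (3) if $\overline{e_A}=f_{i_l}\cdots f_{i_1}\cdot\overline{k_\lambda}=f_{j_s}\cdots f_{j_1}\cdot\overline{k_\lambda}$, then the multisets $\{i_1,\dots,i_l\}$ and $\{j_1,\dots,j_s\}$ are equal; in particular $l=s$.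
   Context: Setting: $n,r\ge 0$; $\Lambda(n,r)$, $\Lambda^\bullet(n,r)$, $M_n(r)$, $\mathrm{ro}$, $\mathrm{co}$, $E_{a,b}$, $D_\lambda$ as usual. $\mathbf{S}_0(n,r)=S_0(n,r)\otimes_{\mathbb Z}\mathbb C$ is the complex $0$-Schur algebra (the $q=0$ specialization of the Dipper–James $q$-Schur algebra). It has the Jensen–Su standard basis $\{e_A:A\in M_n(r)\}$ with: - $e_Ae_B=0$ unless $\mathrm{co}(A)=\mathrm{ro}(B)$, in which case $e_Ae_B=e_C$ for a unique $C$. - $k_\lambda:=e_{D_\lambda}$ satisfies $k_\lambda e_A=\delta_{\lambda,\mathrm{ro}(A)}e_A$ and $e_Ak_\lambda=\delta_{\lambda,\mathrm{co}(A)}e_A$. - $e_i=\sum_\lambda e_{D_\lambda-E_{i+1,i+1}+E_{i,i+1}}$ and $f_i=\sum_\lambda e_{D_\lambda-E_{i,i}+E_{i+1,i}}$ for $1\le i\le n-1$ (sums over $\lambda$ giving nonnegative matrices). - If $\mathrm{ro}(A)=\lambda$: $e_ie_A=e_{A+E_{i,p}-E_{i+1,p}}$ when $\lambda_{i+1}>0$, where $p$ is the largest $j$ with $a_{i+1,j}>0$, and $e_ie_A=0$ otherwise. - $f_ie_A=e_{A-E_{i,q}+E_{i+1,q}}$ when $\lambda_i>0$, where $q$ is the smallest $j$ with $a_{i,j}>0$, and $f_ie_A=0$ otherwise. $P_\lambda$: for a strong composition $\alpha=(\alpha_1,\dots,\alpha_s)$ of $n$, cut $\lambda$ into consecutive pieces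 of lengths $\alpha_1,\dots,\alpha_s$. $\alpha\in\max(\lambda)$ if each piece is $(0)$ or has nonzero first and last entries. $A(\alpha;v)$ keeps the columns of $A$ with indices in the $v$-th block and zeroes the others. A matrix is open if $a_{i,j}a_{i',j'}=0$ for all $i<i'$, $j<j'$. $A$ is open on columns w.r.t. $\alpha$ if every $A(\alpha;v)$ is open. $B^{\lambda,\alpha}=\{e_A:\mathrm{co}(A)=\lambda, A\text{ open on columns w.r.t. }\alpha\}$, and $B^\lambda=\{e_A:\mathrm{co}(A)=\lambda\}\setminus\bigcup_{\alpha\in\max(\lambda)\setminus\{(1^n)\}}B^{\lambda,\alpha}$. $P_\lambda=\mathbb C B^\lambda$, with $b\cdot e_A=e_B$ if $be_A=e_B$ in $S_0(n,r)$ and $e_B\in B^\lambda$, and $0$ otherwise, for $b\in\{e_i,f_i,k_\mu\}$. Column block diagonal matrix: $a_{i,j}>0\Rightarrow a_{i',s}=0$ for all $i'\le i$, $s>j$. $\mathrm{cb}(\lambda)$ is the set of such $n\times n$ matrices with $\mathrm{co}(A)=\lambda$, and $\beta^\lambda=\{e_A:A\in\mathrm{cb}(\lambda)\}\subseteq B^\lambda$. The span $N_\lambda$ of $B^\lambda\setminus\beta^\lambda$ is a submodule of $P_\lambda$. Set $S_\lambda=P_\lambda/N_\lambda$, with basis $\overline{e_A}=e_A+N_\lambda$ for $A\in\mathrm{cb}(\lambda)$; note $k_\lambda\in\beta^\lambda$. *)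

theory Defs
  imports Complex_Main "HOL-Library.Multiset"
begin

text \<open>An n x n matrix over nat is a function A :: nat => nat => nat whose
  entries are indexed 1-based by {1..n} x {1..n} and vanish outside.\<close>

type_synonym nmat = "nat \<Rightarrow> nat \<Rightarrow> nat"

definition is_nmat :: "nat \<Rightarrow> nmat \<Rightarrow> bool" where
  "is_nmat n A \<longleftrightarrow> (\<forall>i j. A i j \<noteq> 0 \<longrightarrow> i \<in> {1..n} \<and> j \<in> {1..n})"

definition Lambda :: "nat \<Rightarrow> nat \<Rightarrow> (nat \<Rightarrow> nat) set" where
  "Lambda n r = {lam. (\<forall>i. lam i \<noteq> 0 \<longrightarrow> i \<in> {1..n}) \<and> (\<Sum>i=1..n. lam i) = r}"

definition Lambda_bullet :: "nat \<Rightarrow> nat \<Rightarrow> (nat \<Rightarrow> nat) set" where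
  "Lambda_bullet n r = {lam \<in> Lambda n r. \<forall>i. 1 \<le> i \<and> i < n \<and> lam i = 0 \<longrightarrow> lam (Suc i) = 0}"

definition ro :: "nat \<Rightarrow> nmat \<Rightarrow> nat \<Rightarrow> nat" where
  "ro n A = (\<lambda>i. if i \<in> {1..n} then (\<Sum>j=1..n. A i j) else 0)"

definition co :: "nat \<Rightarrow> nmat \<Rightarrow> nat \<Rightarrow> nat" where
  "co n A = (\<lambda>j. if j \<in> {1..n} then (\<Sum>i=1..n. A i j) else 0)"

definition Dmat :: "(nat \<Rightarrow> nat) \<Rightarrow> nmat" where
  "Dmat lam = (\<lambda>i j. if i = j then lam i else 0)"

definition col_block_diag :: "nmat \<Rightarrow> bool" where
  "col_block_diag A \<longleftrightarrow> (\<forall>i j. 0 < A i j \<longrightarrow> (\<forall>i' s. i' \<le> i \<and> j < s \<longrightarrow> A i' s = 0))"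

definition cb :: "nat \<Rightarrow> (nat \<Rightarrow> nat) \<Rightarrow> nmat set" where
  "cb n lam = {A. is_nmat n A \<and> col_block_diag A \<and> co n A = lam}"

text \<open>Products e_i e_A and f_i e_A in S_0(n,r) (Jensen--Su standard basis):
  Some B means the product equals e_B, None means the product is 0.\<close>
definition e_mult :: "nat \<Rightarrow> nat \<Rightarrow> nmat \<Rightarrow> nmat option" where
  "e_mult n i A =
     (if 0 < ro n A (Suc i) then
        (let p = Max {j \<in> {1..n}. 0 < A (Suc i) j} in
          Some (\<lambda>a b. if a = i \<and> b = p then A a b + 1
                       else if a = Suc i \<and> b = p then A a b - 1 else A a b))
      else None)"

definition f_mult :: "nat \<Rightarrow> nat \<Rightarrow> nmat \<Rightarrow> nmat option" where
  "f_mult n i A =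
     (if 0 < ro n A i then
        (let q = Min {j \<in> {1..n}. 0 < A i j} in
          Some (\<lambda>a b. if a = i \<and> b = q then A a b - 1
                       else if a = Suc i \<and> b = q then A a b + 1 else A a b))
      else None)"

text \<open>The module S_lambda = P_lambda / N_lambda, realised on its basis
  {bar e_A : A in cb(lambda)}: a vector is its coefficient function.
  For a generator b with b e_A = e_B (or 0) in S_0(n,r), the induced action is
  b . bar e_A = bar e_B if B in cb(lambda), and 0 otherwise, extended linearly.\<close>
type_synonym svec = "nmat \<Rightarrow> complex"

definition sbasis :: "nmat \<Rightarrow> svec" where
  "sbasis A = (\<lambda>B. if B = A then 1 else 0)"

definition S_act :: "nat \<Rightarrow> (nat \<Rightarrow> nat) \<Rightarrow> (nmat \<Rightarrow> nmat option) \<Rightarrow> svec \<Rightarrow> svec" where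
  "S_act n lam g v =
     (\<lambda>B. if B \<in> cb n lam then (\<Sum>A\<in>cb n lam. if g A = Some B then v A else 0) else 0)"

text \<open>e_{i_1} e_{i_2} ... e_{i_l} . v  for is = [i_1,...,i_l].\<close>
definition E_word :: "nat \<Rightarrow> (nat \<Rightarrow> nat) \<Rightarrow> nat list \<Rightarrow> svec \<Rightarrow> svec" where
  "E_word n lam is v = foldr (\<lambda>i w. S_act n lam (e_mult n i) w) is v"

text \<open>f_{i_l} ... f_{i_2} f_{i_1} . v  for is = [i_1,...,i_l].\<close>
definition F_word_rev :: "nat \<Rightarrow> (nat \<Rightarrow> nat) \<Rightarrow> nat list \<Rightarrow> svec \<Rightarrow> svec" where
  "F_word_rev n lam is v = foldr (\<lambda>i w. S_act n lam (f_mult n i) w) (rev is) v"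

end

theory Submission
  imports Defs
begin

text \<open>A column block diagonal matrix has at most one nonzero entry in each row. Hence on
  \<open>cb(\<lambda>)\<close> the generators \<open>e\<^sub>i\<close> and \<open>f\<^sub>i\<close> move a single unit inside a column between rows
  \<open>i + 1\<close> and \<open>i\<close>, and they are mutually inverse partial bijections of \<open>cb(\<lambda>)\<close>; this gives (2).
  Each \<open>f\<^sub>i\<close> lowers the \<open>i\<close>-th row sum by one and raises the \<open>(i + 1)\<close>-th one, so the row sums
  of \<open>A\<close> determine how often each index occurs in a word reaching \<open>A\<close> from \<open>D\<^sub>\<lambda>\<close>, which is (3).
  For (1), as long as \<open>A \<noteq> D\<^sub>\<lambda>\<close> some \<open>e\<^sub>i\<close> keeps \<open>A\<close> inside \<open>cb(\<lambda>)\<close> (this is where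
  \<open>\<lambda> \<in> \<Lambda>\<^sup>\<bullet>(n,r)\<close> enters), and every such step decreases \<open>\<Sum>\<^sub>t t \<cdot> ro(A)\<^sub>t\<close>.\<close>

definition move_unit :: "nmat \<Rightarrow> nat \<Rightarrow> nat \<Rightarrow> nat \<Rightarrow> nmat" where
  "move_unit X a a' q =
     (\<lambda>x y. if x = a \<and> y = q then X x y - 1 else if x = a' \<and> y = q then X x y + 1 else X x y)"

lemma int_move_unit:
  assumes "0 < X a q" "a \<noteq> a'"
  shows "int (move_unit X a a' q x y) =
           int (X x y) - (if x = a \<and> y = q then 1 else 0) + (if x = a' \<and> y = q then 1 else 0)"
  using assms by (auto simp: move_unit_def)

lemma move_unit_inverse:
  assumes "0 < X a q" "a \<noteq> a'"
  shows "move_unit (move_unit X a a' q) a' a q = X"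
  using assms by (auto simp: move_unit_def fun_eq_iff)

lemma is_nmat_pos_entry: "is_nmat n A \<Longrightarrow> 0 < A i j \<Longrightarrow> i \<in> {1..n} \<and> j \<in> {1..n}"
  unfolding is_nmat_def by auto

lemma col_block_diag_row_unique:
  assumes "col_block_diag A" "0 < A a j" "0 < A a j'"
  shows "j = j'"
  using assms unfolding col_block_diag_def by (metis le_refl less_irrefl linorder_neqE_nat)

lemma col_block_diag_rows_increase:
  assumes "col_block_diag A" "0 < A a j" "0 < A b s" "j < s"
  shows "a < b"
  using assms unfolding col_block_diag_def by (metis not_less less_irrefl)

lemma row_support_col_block_diag:
  assumes "is_nmat n A" "col_block_diag A" "0 < A a q"
  shows "{j \<in> {1..n}. 0 < A a j} = {q}"
  using is_nmat_pos_entry[OF assms(1,3)] col_block_diag_row_unique[OF assms(2) _ assms(3)]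
    assms(3) by blast

lemma sum_nat_gr_zero_iff: "finite S \<Longrightarrow> 0 < (\<Sum>x\<in>S. f x :: nat) \<longleftrightarrow> (\<exists>x\<in>S. 0 < f x)"
  by (metis not_gr_zero sum_eq_0_iff)

lemma ro_pos_iff: "0 < ro n X t \<longleftrightarrow> t \<in> {1..n} \<and> (\<exists>j\<in>{1..n}. 0 < X t j)"
  unfolding ro_def by (auto simp: sum_nat_gr_zero_iff)

lemma co_pos_iff: "0 < co n X t \<longleftrightarrow> t \<in> {1..n} \<and> (\<exists>i\<in>{1..n}. 0 < X i t)"
  unfolding co_def by (auto simp: sum_nat_gr_zero_iff)

lemma co_move_unit:
  assumes "0 < X a q" "a \<noteq> a'" "a \<in> {1..n}" "a' \<in> {1..n}"
  shows "co n (move_unit X a a' q) = co n X"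
proof
  fix t
  show "co n (move_unit X a a' q) t = co n X t"
  proof (cases "t \<in> {1..n}")
    case True
    have "int (\<Sum>i=1..n. move_unit X a a' q i t)
        = (\<Sum>i=1..n. int (X i t) - (if i = a \<and> t = q then 1 else 0)
                        + (if i = a' \<and> t = q then 1 else 0))"
      using int_move_unit[of X a q a', OF assms(1,2)] by simp
    also have "\<dots> = int (\<Sum>i=1..n. X i t)"
      using assms(3,4) by (cases "t = q") (simp_all add: sum.distrib sum_subtractf)
    finally have "(\<Sum>i=1..n. move_unit X a a' q i t) = (\<Sum>i=1..n. X i t)"
      by (simp only: of_nat_eq_iff)
    then show ?thesis using True by (simp add: co_def)
  qed (auto simp: co_def)
qed

lemma ro_move_unit:
  assumes "0 < X a q" "a \<noteq> a'" "q \<in> {1..n}" "a \<in> {1..n}" "a' \<in> {1..n}"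
  shows "int (ro n (move_unit X a a' q) t) =
           int (ro n X t) - (if t = a then 1 else 0) + (if t = a' then 1 else 0)"
proof (cases "t \<in> {1..n}")
  case True
  have "int (\<Sum>j=1..n. move_unit X a a' q t j)
      = (\<Sum>j=1..n. int (X t j) - (if t = a \<and> j = q then 1 else 0)
                      + (if t = a' \<and> j = q then 1 else 0))"
    using int_move_unit[of X a q a', OF assms(1,2)] by simp
  also have "\<dots> = int (\<Sum>j=1..n. X t j) - (if t = a then 1 else 0) + (if t = a' then 1 else 0)"
    using assms(3) by (simp add: sum.distrib sum_subtractf)
  finally show ?thesis using True by (simp add: ro_def)
qed (use assms in \<open>auto simp: ro_def\<close>)

lemma finite_cb: "finite (cb n lam)"
proof -
  define M where "M = (\<Sum>j=1..n. lam j)"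
  define rows where
    "rows = {f :: nat \<Rightarrow> nat. \<forall>j. (j \<in> {1..n} \<longrightarrow> f j \<in> {0..M}) \<and> (j \<notin> {1..n} \<longrightarrow> f j = 0)}"
  let ?mats = "{A :: nmat. \<forall>i. (i \<in> {1..n} \<longrightarrow> A i \<in> rows) \<and> (i \<notin> {1..n} \<longrightarrow> A i = (\<lambda>_. 0))}"
  have "finite rows" unfolding rows_def by (intro finite_set_of_finite_funs) auto
  then have "finite ?mats" by (intro finite_set_of_finite_funs) auto
  moreover have "cb n lam \<subseteq> ?mats"
  proof
    fix A assume A: "A \<in> cb n lam"
    then have nm: "is_nmat n A" by (simp add: cb_def)
    have "A i j \<le> M" if "j \<in> {1..n}" for i j
    proof -
      have "A i j \<le> (\<Sum>i'=1..n. A i' j)"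
        using is_nmat_pos_entry[OF nm, of i j] by (cases "0 < A i j") (auto intro: member_le_sum)
      also have "\<dots> = lam j" using A that by (auto simp: cb_def co_def)
      also have "\<dots> \<le> M" unfolding M_def using that by (intro member_le_sum) auto
      finally show ?thesis .
    qed
    then show "A \<in> ?mats" using nm by (auto simp: rows_def is_nmat_def fun_eq_iff)
  qed
  ultimately show ?thesis by (rule finite_subset[rotated])
qed

text \<open>The basis vector \<open>e\<^sub>B + N\<^sub>\<lambda>\<close> of \<open>S\<^sub>\<lambda>\<close> is encoded as \<open>Some B\<close> and the zero vector
  as \<open>None\<close>; each generator then acts on \<open>cb(\<lambda>)\<close> as a partial map.\<close>

definition vec_of_option :: "nmat option \<Rightarrow> svec" where
  "vec_of_option x = (case x of None \<Rightarrow> (\<lambda>_. 0) | Some B \<Rightarrow> sbasis B)"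

definition cb_step :: "nat \<Rightarrow> (nat \<Rightarrow> nat) \<Rightarrow> (nmat \<Rightarrow> nmat option) \<Rightarrow> nmat \<Rightarrow> nmat option" where
  "cb_step n lam g A = (if A \<in> cb n lam \<and> g A \<in> Some ` cb n lam then g A else None)"

lemma cb_step_eq_Some:
  "cb_step n lam g A = Some B \<longleftrightarrow> A \<in> cb n lam \<and> B \<in> cb n lam \<and> g A = Some B"
  by (auto simp: cb_step_def)

lemma vec_of_option_inject: "vec_of_option x = vec_of_option y \<longleftrightarrow> x = y"
proof
  assume eq: "vec_of_option x = vec_of_option y"
  show "x = y"
    using fun_cong[OF eq, of "the x"] fun_cong[OF eq, of "the y"]
    by (cases x; cases y) (auto simp: vec_of_option_def sbasis_def split: if_splits)
qed simp

lemma S_act_vec_of_option: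
  "S_act n lam g (vec_of_option x) = vec_of_option (Option.bind x (cb_step n lam g))"
proof (cases x)
  case None
  then show ?thesis by (simp add: S_act_def vec_of_option_def fun_eq_iff)
next
  case (Some A)
  show ?thesis
  proof
    fix B
    have "(\<Sum>A'\<in>cb n lam. if g A' = Some B then vec_of_option x A' else 0)
        = (\<Sum>A'\<in>cb n lam. if A' = A then (if g A = Some B then 1 else 0) else 0)"
      by (rule sum.cong) (auto simp: sbasis_def vec_of_option_def Some)
    also have "\<dots> = (if A \<in> cb n lam \<and> g A = Some B then 1 else 0)"
      using finite_cb by simp
    finally have "S_act n lam g (vec_of_option x) B
        = (if B \<in> cb n lam \<and> A \<in> cb n lam \<and> g A = Some B then 1 else 0)"
      by (simp add: S_act_def)
    also have "\<dots> = vec_of_option (Option.bind x (cb_step n lam g)) B"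
      using Some by (auto simp: vec_of_option_def cb_step_def sbasis_def)
    finally show "S_act n lam g (vec_of_option x) B =
        vec_of_option (Option.bind x (cb_step n lam g)) B" .
  qed
qed

fun E_word_cb :: "nat \<Rightarrow> (nat \<Rightarrow> nat) \<Rightarrow> nat list \<Rightarrow> nmat \<Rightarrow> nmat option" where
  "E_word_cb n lam [] A = Some A"
| "E_word_cb n lam (i # xs) A = Option.bind (E_word_cb n lam xs A) (cb_step n lam (e_mult n i))"

fun F_word_cb :: "nat \<Rightarrow> (nat \<Rightarrow> nat) \<Rightarrow> nat list \<Rightarrow> nmat \<Rightarrow> nmat option" where
  "F_word_cb n lam [] A = Some A"
| "F_word_cb n lam (i # xs) A = Option.bind (cb_step n lam (f_mult n i) A) (F_word_cb n lam xs)"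

lemma sbasis_vec_of_option: "sbasis B = vec_of_option (Some B)"
  by (simp add: vec_of_option_def)

lemma E_word_sbasis: "E_word n lam xs (sbasis A) = vec_of_option (E_word_cb n lam xs A)"
proof (induction xs)
  case Nil
  then show ?case by (simp add: E_word_def vec_of_option_def)
next
  case (Cons i xs)
  then show ?case
    by (simp add: E_word_def S_act_vec_of_option flip: Option.bind_assoc)
qed

lemma F_word_rev_vec_of_option:
  "F_word_rev n lam xs (vec_of_option x) = vec_of_option (Option.bind x (F_word_cb n lam xs))"
proof (induction xs arbitrary: x)
  case Nil
  then show ?case by (cases x) (simp_all add: F_word_rev_def)
next
  case (Cons i xs)
  then show ?case
    by (cases x) (simp_all add: F_word_rev_def S_act_vec_of_option)
qed

lemma F_word_rev_sbasis: "F_word_rev n lam xs (sbasis D) = vec_of_option (F_word_cb n lam xs D)"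
  using F_word_rev_vec_of_option[of n lam xs "Some D"] by (simp add: sbasis_vec_of_option)

lemma E_word_cb_append:
  "E_word_cb n lam (xs @ ys) A = Option.bind (E_word_cb n lam ys A) (E_word_cb n lam xs)"
  by (induction xs) (cases "E_word_cb n lam ys A"; simp)+

lemma e_mult_col_block_diag:
  assumes "is_nmat n A" "col_block_diag A" "0 < A (Suc i) p"
  shows "e_mult n i A = Some (move_unit A (Suc i) i p)"
proof -
  have "0 < ro n A (Suc i)"
    using is_nmat_pos_entry[OF assms(1,3)] assms(3) by (auto simp: ro_pos_iff)
  moreover have "Max {j \<in> {1..n}. 0 < A (Suc i) j} = p"
    using row_support_col_block_diag[OF assms] by simp
  ultimately show ?thesis by (simp add: e_mult_def move_unit_def Let_def fun_eq_iff)
qed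

lemma f_mult_col_block_diag:
  assumes "is_nmat n A" "col_block_diag A" "0 < A i q"
  shows "f_mult n i A = Some (move_unit A i (Suc i) q)"
proof -
  have "0 < ro n A i"
    using is_nmat_pos_entry[OF assms(1,3)] assms(3) by (auto simp: ro_pos_iff)
  moreover have "Min {j \<in> {1..n}. 0 < A i j} = q"
    using row_support_col_block_diag[OF assms] by simp
  ultimately show ?thesis by (simp add: f_mult_def move_unit_def Let_def fun_eq_iff)
qed

lemma e_mult_eq_Some_iff:
  assumes "is_nmat n A" "col_block_diag A"
  shows "e_mult n i A = Some B \<longleftrightarrow> (\<exists>p. 0 < A (Suc i) p \<and> B = move_unit A (Suc i) i p)"
proof
  assume g: "e_mult n i A = Some B"
  then have "0 < ro n A (Suc i)" by (simp add: e_mult_def split: if_splits)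
  then obtain p where "0 < A (Suc i) p" by (auto simp: ro_pos_iff)
  then show "\<exists>p. 0 < A (Suc i) p \<and> B = move_unit A (Suc i) i p"
    using g e_mult_col_block_diag[OF assms] by auto
qed (use e_mult_col_block_diag[OF assms] in auto)

lemma cb_step_e_mult_eq_Some:
  "cb_step n lam (e_mult n i) A = Some B \<longleftrightarrow>
     A \<in> cb n lam \<and> B \<in> cb n lam \<and> (\<exists>p. 0 < A (Suc i) p \<and> B = move_unit A (Suc i) i p)"
  by (auto simp: cb_step_eq_Some cb_def e_mult_eq_Some_iff)

lemma f_mult_eq_Some_iff:
  assumes "is_nmat n A" "col_block_diag A"
  shows "f_mult n i A = Some B \<longleftrightarrow> (\<exists>q. 0 < A i q \<and> B = move_unit A i (Suc i) q)"
proof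
  assume g: "f_mult n i A = Some B"
  then have "0 < ro n A i" by (simp add: f_mult_def split: if_splits)
  then obtain q where "0 < A i q" by (auto simp: ro_pos_iff)
  then show "\<exists>q. 0 < A i q \<and> B = move_unit A i (Suc i) q"
    using g f_mult_col_block_diag[OF assms] by auto
qed (use f_mult_col_block_diag[OF assms] in auto)

lemma cb_step_f_mult_eq_Some:
  "cb_step n lam (f_mult n i) A = Some B \<longleftrightarrow>
     A \<in> cb n lam \<and> B \<in> cb n lam \<and> (\<exists>q. 0 < A i q \<and> B = move_unit A i (Suc i) q)"
  by (auto simp: cb_step_eq_Some cb_def f_mult_eq_Some_iff)

lemma cb_step_e_mult_iff_f_mult:
  "cb_step n lam (e_mult n i) C = Some D \<longleftrightarrow> cb_step n lam (f_mult n i) D = Some C"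
proof
  assume "cb_step n lam (e_mult n i) C = Some D"
  then obtain p where cb: "C \<in> cb n lam" "D \<in> cb n lam"
    and p: "0 < C (Suc i) p" and D: "D = move_unit C (Suc i) i p"
    by (auto simp: cb_step_e_mult_eq_Some)
  have "0 < D i p" using D by (simp add: move_unit_def)
  moreover have "move_unit D i (Suc i) p = C" using move_unit_inverse[of C "Suc i" p i] p D by simp
  ultimately show "cb_step n lam (f_mult n i) D = Some C"
    using cb by (auto simp: cb_step_f_mult_eq_Some)
next
  assume "cb_step n lam (f_mult n i) D = Some C"
  then obtain q where cb: "C \<in> cb n lam" "D \<in> cb n lam"
    and q: "0 < D i q" and C: "C = move_unit D i (Suc i) q"
    by (auto simp: cb_step_f_mult_eq_Some)
  have "0 < C (Suc i) q" using C by (simp add: move_unit_def)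
  moreover have "move_unit C (Suc i) i q = D" using move_unit_inverse[of D i q "Suc i"] q C by simp
  ultimately show "cb_step n lam (e_mult n i) C = Some D"
    using cb by (auto simp: cb_step_e_mult_eq_Some)
qed

lemma E_word_cb_eq_Some_iff_F_word_cb:
  "E_word_cb n lam xs A = Some D \<longleftrightarrow> F_word_cb n lam xs D = Some A"
proof (induction xs arbitrary: D)
  case Nil
  then show ?case by auto
next
  case (Cons i xs)
  have "E_word_cb n lam (i # xs) A = Some D \<longleftrightarrow>
      (\<exists>C. E_word_cb n lam xs A = Some C \<and> cb_step n lam (e_mult n i) C = Some D)"
    by (simp add: bind_eq_Some_conv)
  also have "\<dots> \<longleftrightarrow> (\<exists>C. F_word_cb n lam xs C = Some A \<and> cb_step n lam (f_mult n i) D = Some C)"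
    using Cons.IH cb_step_e_mult_iff_f_mult by blast
  also have "\<dots> \<longleftrightarrow> F_word_cb n lam (i # xs) D = Some A"
    by (auto simp: bind_eq_Some_conv)
  finally show ?case .
qed

lemma ro_cb_step_f_mult:
  assumes "cb_step n lam (f_mult n i) X = Some Y"
  shows "int (ro n Y t) = int (ro n X t) - (if t = i then 1 else 0) + (if t = Suc i then 1 else 0)"
proof -
  obtain q where X: "is_nmat n X" and Y: "is_nmat n Y"
    and q: "0 < X i q" and Yq: "Y = move_unit X i (Suc i) q"
    using assms by (auto simp: cb_step_f_mult_eq_Some cb_def)
  have "0 < Y (Suc i) q" using Yq by (simp add: move_unit_def)
  then have "Suc i \<in> {1..n}" using is_nmat_pos_entry[OF Y] by blast
  moreover have "i \<in> {1..n}" "q \<in> {1..n}" using is_nmat_pos_entry[OF X q] by auto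
  ultimately show ?thesis using ro_move_unit[of X i q "Suc i" n t] q Yq by simp
qed

lemma ro_F_word_cb:
  "F_word_cb n lam xs X = Some A \<Longrightarrow>
     int (ro n A (Suc s)) =
       int (ro n X (Suc s)) - int (count (mset xs) (Suc s)) + int (count (mset xs) s)"
proof (induction xs arbitrary: X)
  case (Cons i xs)
  then obtain Y where "cb_step n lam (f_mult n i) X = Some Y" "F_word_cb n lam xs Y = Some A"
    by (auto simp: bind_eq_Some_conv)
  then show ?case using Cons.IH ro_cb_step_f_mult[of n lam i X Y "Suc s"] by auto
qed simp

lemma F_word_cb_determines_mset:
  assumes "0 \<notin> set xs" "0 \<notin> set ys"
    and "F_word_cb n lam xs D = Some A" "F_word_cb n lam ys D = Some A"
  shows "mset xs = mset ys"
proof (rule multiset_eqI)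
  fix s
  show "count (mset xs) s = count (mset ys) s"
  proof (induction s)
    case 0
    then show ?case using assms(1,2) by (metis count_mset_0_iff)
  next
    case (Suc s)
    then show ?case
      using ro_F_word_cb[OF assms(3), of s] ro_F_word_cb[OF assms(4), of s] by linarith
  qed
qed

lemma Lambda_bullet_pos_below:
  assumes "lam \<in> Lambda_bullet n r" "1 \<le> a" "a \<le> c" "0 < lam c"
  shows "0 < lam a"
proof (rule ccontr)
  assume "\<not> 0 < lam a"
  have "lam k = 0" if "a \<le> k" for k
    using that
  proof (induction k rule: dec_induct)
    case base
    then show ?case using \<open>\<not> 0 < lam a\<close> by simp
  next
    case (step k)
    then show ?case using assms(1,2) unfolding Lambda_bullet_def Lambda_def
      by (cases "k < n") auto
  qed
  then show False using assms(3,4) by simp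
qed

lemma eq_Dmat_co_if_diagonal:
  assumes "is_nmat n A" "\<And>a c. 0 < A a c \<Longrightarrow> a = c"
  shows "A = Dmat (co n A)"
proof (intro ext)
  fix x y
  show "A x y = Dmat (co n A) x y"
  proof (cases "x = y \<and> y \<in> {1..n}")
    case True
    have "co n A y = (\<Sum>i=1..n. A i y)" using True by (simp add: co_def)
    also have "\<dots> = (\<Sum>i=1..n. if i = y then A y y else 0)"
      by (intro sum.cong refl) (metis assms(2) neq0_conv)
    finally show ?thesis using True by (simp add: Dmat_def)
  next
    case False
    then show ?thesis
      using assms unfolding Dmat_def co_def is_nmat_def by (auto simp flip: not_gr_zero)
  qed
qed

lemma is_nmat_move_unit:
  assumes "is_nmat n X" "a' \<in> {1..n}" "q \<in> {1..n}"
  shows "is_nmat n (move_unit X a a' q)"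
  using assms unfolding is_nmat_def move_unit_def by (auto simp flip: not_gr_zero dest: Suc_lessD)

lemma col_block_diag_move_unit_up:
  assumes cbd: "col_block_diag A" and pos: "0 < A (Suc i) p" and row: "\<And>c. 0 < A i c \<Longrightarrow> c = p"
  shows "col_block_diag (move_unit A (Suc i) i p)"
  unfolding col_block_diag_def
proof (intro allI impI)
  let ?B = "move_unit A (Suc i) i p"
  fix x y x' s
  assume Bxy: "0 < ?B x y" and xs: "x' \<le> x \<and> y < s"
  show "?B x' s = 0"
  proof (cases "x = i \<and> y = p")
    case True
    then show ?thesis using cbd pos xs unfolding col_block_diag_def move_unit_def by auto
  next
    case False
    then have Axy: "0 < A x y" using Bxy by (auto simp: move_unit_def split: if_splits)
    have "A x' s = 0" using cbd Axy xs unfolding col_block_diag_def by blast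
    moreover have "\<not> (x' = i \<and> s = p)"
    proof
      assume "x' = i \<and> s = p"
      moreover have "x \<noteq> i" using row Axy xs \<open>x' = i \<and> s = p\<close> by auto
      ultimately have "Suc i \<le> x" using xs by simp
      then show False using cbd Axy xs pos \<open>x' = i \<and> s = p\<close> unfolding col_block_diag_def by auto
    qed
    ultimately show ?thesis by (auto simp: move_unit_def)
  qed
qed

lemma move_unit_up_in_cb:
  assumes A: "A \<in> cb n lam" and pos: "0 < A (Suc i) p" and row: "\<And>c. 0 < A i c \<Longrightarrow> c = p"
    and "1 \<le> i"
  shows "move_unit A (Suc i) i p \<in> cb n lam"
proof -
  have nm: "is_nmat n A" using A by (simp add: cb_def)
  have "Suc i \<in> {1..n}" "p \<in> {1..n}" using is_nmat_pos_entry[OF nm pos] by auto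
  moreover have "i \<in> {1..n}" using \<open>Suc i \<in> {1..n}\<close> \<open>1 \<le> i\<close> by auto
  ultimately show ?thesis
    using A pos row is_nmat_move_unit co_move_unit[of A "Suc i" p i n]
      col_block_diag_move_unit_up[of A i p]
    by (simp add: cb_def)
qed

text \<open>Take the topmost row \<open>a\<^sub>0\<close> with an off-diagonal entry. That entry lies left of the
  diagonal, since otherwise \<open>\<lambda> \<in> \<Lambda>\<^sup>\<bullet>(n,r)\<close> forces a nonzero entry in column \<open>a\<^sub>0\<close> above
  row \<open>a\<^sub>0\<close>; so one unit of it can be moved up into the diagonal row above.\<close>

lemma exists_e_step_in_cb:
  assumes lam: "lam \<in> Lambda_bullet n r" and A: "A \<in> cb n lam" and ne: "A \<noteq> Dmat lam"
  shows "\<exists>i p. i \<in> {1..<n} \<and> 0 < A (Suc i) p \<and> move_unit A (Suc i) i p \<in> cb n lam"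
proof -
  have nm: "is_nmat n A" and cbd: "col_block_diag A" and co: "co n A = lam"
    using A by (auto simp: cb_def)
  have "\<exists>a c. 0 < A a c \<and> a \<noteq> c" using eq_Dmat_co_if_diagonal[OF nm] co ne by blast
  then obtain a0 c0 where ac: "0 < A a0 c0" "a0 \<noteq> c0"
    and above: "\<And>b c. b < a0 \<Longrightarrow> 0 < A b c \<Longrightarrow> c = b"
    using exists_least_iff[of "\<lambda>a. \<exists>c. 0 < A a c \<and> a \<noteq> c"] by blast
  have rng: "a0 \<in> {1..n}" "c0 \<in> {1..n}" using is_nmat_pos_entry[OF nm ac(1)] by auto
  have "c0 < a0"
  proof (rule ccontr)
    assume "\<not> c0 < a0"
    with ac(2) have "a0 < c0" by simp
    have "0 < lam c0" using rng ac(1) co_pos_iff[of n A c0] co by blast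
    then have "0 < lam a0" using Lambda_bullet_pos_below[OF lam, of a0 c0] rng \<open>a0 < c0\<close> by simp
    then obtain b where b: "0 < A b a0" using co by (auto simp: co_pos_iff)
    then have "b < a0" using col_block_diag_rows_increase[OF cbd _ ac(1) \<open>a0 < c0\<close>] by blast
    with above[of b a0] b show False by simp
  qed
  define i where "i = a0 - 1"
  have a0: "a0 = Suc i" and i: "i \<in> {1..<n}" using \<open>c0 < a0\<close> rng by (auto simp: i_def)
  have "c = c0" if "0 < A i c" for c
  proof -
    have "c = i" using above[OF _ that] a0 by simp
    moreover have "\<not> c0 < i"
      using col_block_diag_rows_increase[OF cbd ac(1) that] \<open>c = i\<close> a0 by auto
    ultimately show ?thesis using \<open>c0 < a0\<close> a0 by simp
  qed
  then have "move_unit A (Suc i) i c0 \<in> cb n lam"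
    using move_unit_up_in_cb[OF A] ac(1) a0 i by auto
  then show ?thesis using ac(1) a0 i by blast
qed

definition row_weight :: "nat \<Rightarrow> nmat \<Rightarrow> nat" where
  "row_weight n A = (\<Sum>t=1..n. t * ro n A t)"

lemma row_weight_move_unit:
  assumes "0 < X a q" "a \<noteq> a'" "q \<in> {1..n}" "a \<in> {1..n}" "a' \<in> {1..n}"
  shows "int (row_weight n (move_unit X a a' q)) = int (row_weight n X) - int a + int a'"
proof -
  have "int (row_weight n (move_unit X a a' q)) =
      (\<Sum>t=1..n. int t * int (ro n X t) - (if t = a then int t else 0)
                   + (if t = a' then int t else 0))"
    unfolding row_weight_def
    by (auto intro!: sum.cong simp: ro_move_unit[of X a q a' n, OF assms] algebra_simps)
  also have "\<dots> = int (row_weight n X) - int a + int a'"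
    using assms(4,5) by (simp add: row_weight_def sum.distrib sum_subtractf)
  finally show ?thesis .
qed

lemma E_word_cb_reaches_Dmat:
  assumes lam: "lam \<in> Lambda_bullet n r"
  shows "A \<in> cb n lam \<Longrightarrow> \<exists>xs. set xs \<subseteq> {1..<n} \<and> E_word_cb n lam xs A = Some (Dmat lam)"
proof (induction "row_weight n A" arbitrary: A rule: less_induct)
  case less
  show ?case
  proof (cases "A = Dmat lam")
    case True
    then show ?thesis by (intro exI[of _ "[]"]) simp
  next
    case False
    then obtain i p where i: "i \<in> {1..<n}" and p: "0 < A (Suc i) p"
      and B: "move_unit A (Suc i) i p \<in> cb n lam"
      using exists_e_step_in_cb[OF lam less.prems] by blast
    have "p \<in> {1..n}" using is_nmat_pos_entry[of n A "Suc i" p] less.prems p by (auto simp: cb_def)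
    then have "row_weight n (move_unit A (Suc i) i p) < row_weight n A"
      using row_weight_move_unit[of A "Suc i" p i n] p i by simp
    then obtain ys where "set ys \<subseteq> {1..<n}"
      and "E_word_cb n lam ys (move_unit A (Suc i) i p) = Some (Dmat lam)"
      using less.hyps B by blast
    moreover have "cb_step n lam (e_mult n i) A = Some (move_unit A (Suc i) i p)"
      using less.prems p B by (auto simp: cb_step_e_mult_eq_Some)
    ultimately show ?thesis using i by (intro exI[of _ "ys @ [i]"]) (auto simp: E_word_cb_append)
  qed
qed

theorem mainTheorem3:
  fixes n r :: nat and lam :: "nat \<Rightarrow> nat" and A :: nmat
  assumes "lam \<in> Lambda_bullet n r" and "A \<in> cb n lam"
  shows "(\<exists>is. set is \<subseteq> {1..<n} \<and>
            E_word n lam is (sbasis A) = sbasis (Dmat lam))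
       \<and> (\<forall>is. set is \<subseteq> {1..<n} \<longrightarrow>
            (E_word n lam is (sbasis A) = sbasis (Dmat lam)
             \<longleftrightarrow> sbasis A = F_word_rev n lam is (sbasis (Dmat lam))))
       \<and> (\<forall>is js. set is \<subseteq> {1..<n} \<and> set js \<subseteq> {1..<n}
            \<and> sbasis A = F_word_rev n lam is (sbasis (Dmat lam))
            \<and> sbasis A = F_word_rev n lam js (sbasis (Dmat lam))
            \<longrightarrow> mset is = mset js \<and> length is = length js)"
proof -
  have E: "E_word n lam xs (sbasis A) = sbasis (Dmat lam) \<longleftrightarrow>
      E_word_cb n lam xs A = Some (Dmat lam)" for xs
    unfolding E_word_sbasis sbasis_vec_of_option[of "Dmat lam"] vec_of_option_inject ..
  have F: "sbasis A = F_word_rev n lam xs (sbasis (Dmat lam)) \<longleftrightarrow>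
      F_word_cb n lam xs (Dmat lam) = Some A" for xs
    unfolding F_word_rev_sbasis sbasis_vec_of_option[of A] vec_of_option_inject by auto
  have part1: "\<exists>xs. set xs \<subseteq> {1..<n} \<and> E_word n lam xs (sbasis A) = sbasis (Dmat lam)"
    using E_word_cb_reaches_Dmat[OF assms] by (simp add: E)
  have part2: "E_word n lam xs (sbasis A) = sbasis (Dmat lam) \<longleftrightarrow>
      sbasis A = F_word_rev n lam xs (sbasis (Dmat lam))" for xs
    by (simp add: E F E_word_cb_eq_Some_iff_F_word_cb)
  have part3: "mset xs = mset ys \<and> length xs = length ys"
    if "set xs \<subseteq> {1..<n}" "set ys \<subseteq> {1..<n}"
      and "sbasis A = F_word_rev n lam xs (sbasis (Dmat lam))"
      and "sbasis A = F_word_rev n lam ys (sbasis (Dmat lam))" for xs ys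
  proof -
    have "0 \<notin> set xs" "0 \<notin> set ys" using that(1,2) by auto
    moreover have "F_word_cb n lam xs (Dmat lam) = Some A" "F_word_cb n lam ys (Dmat lam) = Some A"
      using that(3,4) F by blast+
    ultimately have "mset xs = mset ys" by (rule F_word_cb_determines_mset)
    then show ?thesis using size_mset by metis
  qed
  show ?thesis using part1 part2 part3 by blast
qed

end
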